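(* Let $f:\mathcal{X}\to\Delta^{k-1}$ be a classifier outputting confidence vectors, and let $x^{(1)},\dots,x^{(n)}\in\mathcal{X}$ be (unlabeled) samples. Let $f_\# P(c)=\frac1n\sum_{i=1}^n\delta_{f(x^{(i)})}$ be the empirical distribution of confidence vectors, and let $P_{\mathrm{pseudo}}(y)=\frac1n\sum_{i=1}^n\delta_{y^{(i)}}$, where $y^{(i)}\in\{0,1\}^k\cap\Delta^{k-1}$ is the one-hot pseudo-label with $y^{(i)}_j=\mathbb{1}[j=\arg\max_{j'} f_{j'}(x^{(i)})]$. Define the average-confidence error estimate $\hat\epsilon_{\mathrm{AC}}=\frac1n\sum_{i=1}^n\bigl(1-\max_j f_j(x^{(i)})\bigr)$. Then $$\hat\epsilon_{\mathrm{AC}}=W_\infty\bigl(f_\# P(c),\,P_{\mathrm{pseudo}}(y)\bigr).$$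
   Context: $\Delta^{k-1}=\{c\in\mathbb{R}^k: c_j\ge 0,\ \sum_j c_j=1\}$ is the probability simplex. For probability distributions $P,Q$ on $\mathbb{R}^k$, $W_\infty(P,Q)=\inf_{\pi\in\Pi(P,Q)}\int\|u-v\|_\infty\,d\pi(u,v)$, where $\Pi(P,Q)$ is the set of couplings of $P$ and $Q$; i.e. $W_\infty$ denotes the Wasserstein (optimal transport) distance with ground cost $c(u,v)=\|u-v\|_\infty$ (not the usual $\infty$-Wasserstein distance). Ties in $\arg\max$ are broken by a fixed rule (e.g. smallest index). *)

theory Defs
  imports "HOL-Analysis.Analysis" "HOL-Probability.Probability"
begin

definition prob_simplex :: "(real ^ 'k::finite) set" where
  "prob_simplex = {c. (\<forall>j. 0 \<le> c $ j) \<and> (\<Sum>j\<in>UNIV. c $ j) = 1}"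

definition linf_dist :: "real ^ 'k::finite \<Rightarrow> real ^ 'k \<Rightarrow> real" where
  "linf_dist u v = (MAX j\<in>UNIV. \<bar>u $ j - v $ j\<bar>)"

definition argmax_idx :: "real ^ 'k::{finite,wellorder} \<Rightarrow> 'k" where
  "argmax_idx c = (LEAST j. \<forall>j'. c $ j' \<le> c $ j)"

definition one_hot :: "'k::finite \<Rightarrow> real ^ 'k" where
  "one_hot j = (\<chi> i. if i = j then 1 else 0)"

definition W_inf :: "(real ^ 'k::finite) pmf \<Rightarrow> (real ^ 'k) pmf \<Rightarrow> real" where
  "W_inf P Q = Inf {measure_pmf.expectation \<pi> (\<lambda>(u, v). linf_dist u v) | \<pi>.
                    map_pmf fst \<pi> = P \<and> map_pmf snd \<pi> = Q}"

definition empirical :: "nat \<Rightarrow> (nat \<Rightarrow> 'a) \<Rightarrow> 'a pmf" where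
  "empirical n g = map_pmf g (pmf_of_set {..<n})"

end

theory Submission
  imports Defs
begin

text \<open>Each sample u is at sup-distance at least 1 - u_j \<ge> 1 - max u from any
  one-hot vector e_j, with equality for e_j the pseudo-label of u: the other
  coordinates of u sum to at most 1 - max u. Hence the transport cost of any
  coupling dominates the integral of 1 - max over its first marginal, which does
  not depend on the coupling, and the coupling pairing each sample with its own
  pseudo-label attains this bound.\<close>

lemma prob_simplex_nth_le_1:
  fixes u :: "real ^ 'k::finite"
  assumes "u \<in> prob_simplex"
  shows "u $ i \<le> 1"
proof -
  have "(\<Sum>l\<in>{i}. u $ l) \<le> (\<Sum>l\<in>UNIV. u $ l)"
    using assms by (intro sum_mono2) (auto simp: prob_simplex_def)
  then show ?thesis using assms by (simp add: prob_simplex_def)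
qed

lemma prob_simplex_add_nth_le_1:
  fixes u :: "real ^ 'k::finite"
  assumes "u \<in> prob_simplex" "i \<noteq> j"
  shows "u $ i + u $ j \<le> 1"
proof -
  have "(\<Sum>l\<in>{i, j}. u $ l) \<le> (\<Sum>l\<in>UNIV. u $ l)"
    using assms by (intro sum_mono2) (auto simp: prob_simplex_def)
  then show ?thesis using assms by (simp add: prob_simplex_def)
qed

lemma nth_le_argmax_idx:
  fixes u :: "real ^ 'k::{finite,wellorder}"
  shows "u $ j \<le> u $ argmax_idx u"
proof -
  obtain m where "u $ m = (MAX j\<in>UNIV. u $ j)"
    by (metis (mono_tags, lifting) Max_in empty_not_UNIV finite finite_imageI image_iff image_is_empty)
  then have "\<forall>j'. u $ j' \<le> u $ m" by auto
  then have "\<forall>j'. u $ j' \<le> u $ argmax_idx u"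
    unfolding argmax_idx_def by (rule LeastI)
  then show ?thesis ..
qed

lemma Max_nth_eq_argmax_idx:
  fixes u :: "real ^ 'k::{finite,wellorder}"
  shows "(MAX j\<in>UNIV. u $ j) = u $ argmax_idx u"
  by (intro antisym) (auto intro: Max_ge nth_le_argmax_idx)

lemma linf_dist_one_hot_ge:
  fixes u :: "real ^ 'k::finite"
  assumes "u \<in> prob_simplex"
  shows "1 - (MAX j\<in>UNIV. u $ j) \<le> linf_dist u (one_hot i)"
proof -
  have "1 - (MAX j\<in>UNIV. u $ j) \<le> 1 - u $ i" by (simp add: Max_ge)
  also have "\<dots> = \<bar>u $ i - one_hot i $ i\<bar>"
    using prob_simplex_nth_le_1[OF assms] by (simp add: one_hot_def)
  also have "\<dots> \<le> linf_dist u (one_hot i)"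
    unfolding linf_dist_def by (simp add: Max_ge)
  finally show ?thesis .
qed

lemma linf_dist_one_hot_argmax_idx:
  fixes u :: "real ^ 'k::{finite,wellorder}"
  assumes "u \<in> prob_simplex"
  shows "linf_dist u (one_hot (argmax_idx u)) = 1 - (MAX j\<in>UNIV. u $ j)"
proof (rule antisym)
  have "\<bar>u $ i - one_hot (argmax_idx u) $ i\<bar> \<le> 1 - u $ argmax_idx u" for i
  proof (cases "i = argmax_idx u")
    case True
    then show ?thesis using prob_simplex_nth_le_1[OF assms] by (simp add: one_hot_def)
  next
    case False
    then show ?thesis using prob_simplex_add_nth_le_1[OF assms False] assms
      by (auto simp: one_hot_def prob_simplex_def)
  qed
  then show "linf_dist u (one_hot (argmax_idx u)) \<le> 1 - (MAX j\<in>UNIV. u $ j)"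
    unfolding linf_dist_def Max_nth_eq_argmax_idx by (auto intro: Max.boundedI)
qed (rule linf_dist_one_hot_ge[OF assms])

lemma set_pmf_coupling_subset:
  assumes "map_pmf fst \<pi> = P" "map_pmf snd \<pi> = Q"
  shows "set_pmf \<pi> \<subseteq> set_pmf P \<times> set_pmf Q"
  using assms by force

lemma expectation_le_coupling_cost:
  fixes \<phi> :: "'a \<Rightarrow> real" and cost :: "'a \<Rightarrow> 'b \<Rightarrow> real"
  assumes "finite (set_pmf P)" "finite (set_pmf Q)"
    and "map_pmf fst \<pi> = P" "map_pmf snd \<pi> = Q"
    and "\<And>u v. u \<in> set_pmf P \<Longrightarrow> v \<in> set_pmf Q \<Longrightarrow> \<phi> u \<le> cost u v"
  shows "measure_pmf.expectation P \<phi> \<le> measure_pmf.expectation \<pi> (\<lambda>(u, v). cost u v)"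
proof -
  have supp: "set_pmf \<pi> \<subseteq> set_pmf P \<times> set_pmf Q"
    using set_pmf_coupling_subset[OF assms(3,4)] .
  then have fin: "finite (set_pmf \<pi>)"
    using assms(1,2) by (rule finite_subset[OF _ finite_cartesian_product])
  have "measure_pmf.expectation P \<phi> = measure_pmf.expectation \<pi> (\<lambda>p. \<phi> (fst p))"
    using assms(3) by force
  also have "\<dots> \<le> measure_pmf.expectation \<pi> (\<lambda>(u, v). cost u v)"
    using fin supp assms(5)
    by (intro integral_mono_AE integrable_measure_pmf_finite AE_pmfI) auto
  finally show ?thesis .
qed

lemma W_inf_eq_expectation:
  fixes \<phi> :: "real ^ 'k::finite \<Rightarrow> real"
  assumes "finite (set_pmf P)" "finite (set_pmf Q)"
    and "map_pmf fst \<pi>\<^sub>0 = P" "map_pmf snd \<pi>\<^sub>0 = Q"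
    and "\<And>u v. u \<in> set_pmf P \<Longrightarrow> v \<in> set_pmf Q \<Longrightarrow> \<phi> u \<le> linf_dist u v"
    and "\<And>u v. (u, v) \<in> set_pmf \<pi>\<^sub>0 \<Longrightarrow> linf_dist u v = \<phi> u"
  shows "W_inf P Q = measure_pmf.expectation P \<phi>"
  unfolding W_inf_def
proof (rule cInf_eq_minimum)
  have "measure_pmf.expectation \<pi>\<^sub>0 (\<lambda>(u, v). linf_dist u v)
      = measure_pmf.expectation \<pi>\<^sub>0 (\<lambda>p. \<phi> (fst p))"
    using assms(6) by (intro integral_cong_AE) (auto intro: AE_pmfI)
  also have "\<dots> = measure_pmf.expectation P \<phi>"
    using assms(3) by force
  finally show "measure_pmf.expectation P \<phi> \<in> {measure_pmf.expectation \<pi> (\<lambda>(u, v). linf_dist u v) | \<pi>.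
      map_pmf fst \<pi> = P \<and> map_pmf snd \<pi> = Q}"
    using assms(3,4) by force
next
  fix c assume "c \<in> {measure_pmf.expectation \<pi> (\<lambda>(u, v). linf_dist u v) | \<pi>.
      map_pmf fst \<pi> = P \<and> map_pmf snd \<pi> = Q}"
  then obtain \<pi> where "map_pmf fst \<pi> = P" "map_pmf snd \<pi> = Q"
    and "c = measure_pmf.expectation \<pi> (\<lambda>(u, v). linf_dist u v)"
    by blast
  then show "measure_pmf.expectation P \<phi> \<le> c"
    using expectation_le_coupling_cost assms(1,2,5) by metis
qed

lemma set_pmf_empirical:
  assumes "n \<ge> 1"
  shows "set_pmf (empirical n g) = g ` {..<n}"
proof -
  have "{..<n} \<noteq> {}" using assms by (simp add: lessThan_empty_iff)
  then show ?thesis by (simp add: empirical_def)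
qed

lemma expectation_empirical:
  fixes \<phi> :: "'a \<Rightarrow> real"
  assumes "n \<ge> 1"
  shows "measure_pmf.expectation (empirical n g) \<phi> = (1 / real n) * (\<Sum>i<n. \<phi> (g i))"
proof -
  have "{..<n} \<noteq> {}" using assms by (simp add: lessThan_empty_iff)
  then show ?thesis by (simp add: empirical_def integral_pmf_of_set)
qed

lemma empirical_pair_marginals:
  "map_pmf fst (empirical n (\<lambda>i. (g i, h i))) = empirical n g"
  "map_pmf snd (empirical n (\<lambda>i. (g i, h i))) = empirical n h"
  by (simp_all add: empirical_def pmf.map_comp o_def)

theorem mainTheorem1:
  fixes f :: "'x \<Rightarrow> real ^ 'k::{finite,wellorder}"
    and xs :: "nat \<Rightarrow> 'x"
    and n :: nat
  assumes "\<forall>x. f x \<in> prob_simplex"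
    and "n \<ge> 1"
  shows "(1 / real n) * (\<Sum>i<n. 1 - (MAX j\<in>UNIV. f (xs i) $ j))
         = W_inf (empirical n (\<lambda>i. f (xs i)))
                 (empirical n (\<lambda>i. one_hot (argmax_idx (f (xs i)))))"
proof -
  define g where "g = (\<lambda>i. f (xs i))"
  define h where "h = (\<lambda>i. one_hot (argmax_idx (g i)))"
  have "W_inf (empirical n g) (empirical n h)
      = measure_pmf.expectation (empirical n g) (\<lambda>u. 1 - (MAX j\<in>UNIV. u $ j))"
  proof (rule W_inf_eq_expectation[OF _ _ empirical_pair_marginals])
    show "1 - (MAX j\<in>UNIV. u $ j) \<le> linf_dist u v"
      if "u \<in> set_pmf (empirical n g)" "v \<in> set_pmf (empirical n h)" for u v
      using that assms linf_dist_one_hot_ge by (auto simp: set_pmf_empirical g_def h_def)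
    show "linf_dist u v = 1 - (MAX j\<in>UNIV. u $ j)"
      if "(u, v) \<in> set_pmf (empirical n (\<lambda>i. (g i, h i)))" for u v
      using that assms linf_dist_one_hot_argmax_idx by (auto simp: set_pmf_empirical g_def h_def)
  qed (use assms(2) in \<open>simp_all add: set_pmf_empirical\<close>)
  then show ?thesis
    using assms(2) by (simp add: expectation_empirical g_def h_def)
qed

end
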